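(* Let $S$ be a Sauer Matrix of size $4$ and let $r \in [0,1)^4$ be feasible for $S$. (i) If $S$ is of type $(0,4)$, then $r = (\tfrac12,\tfrac12,\tfrac12,\tfrac12)^\intercal$. (ii) If $S$ is of type $(1,3)$, then $r = (0,\tfrac12,\tfrac12,\tfrac12)^\intercal$. (iii) If $S$ is of type $(2,2)$, then $r = (0,0,\tfrac12,\tfrac12)^\intercal$. (iv) If $S$ is of type $(3,1)$ or $(4,0)$, then $S$ is infeasible for translations (i.e. no such $r$ exists).
   Context: A real matrix is totally $1$-submodular if every square submatrix (of every size) has determinant of absolute value at most $1$. For $r\in\mathbb{R}^k$ and a matrix $S$ with $k$ rows and columns $S_1,\dots,S_N$, $r+S$ is the matrix with columns $r+S_i$. A Sauer Matrix of size $k$ is a matrix $S\in\{-1,0,1\}^{k\times 2^k}$ such that every subset of $[k]$ is the support (set of nonzero coordinates) of exactly one column, the nonzero entries being arbitrary elements of $\{-1,1\}$. A vector $r\in[0,1)^k$ is feasible for $S$ if $r+S$ is totally $1$-submodular; $S$ is feasible for translations if some $r\in[0,1)^k$ is feasible for $S$, and infeasible for translations otherwise. $S$ is of type $(s,k-s)$ if exactly $s$ of its rows contain at least one entry equal to $1$; by convention the rows are ordered so that these are the first $s$ rows. *)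

theory Defs
  imports "Jordan_Normal_Form.Determinant" "Jordan_Normal_Form.DL_Submatrix"
begin

(* Rows are indexed 0..<k (paper: [k] = {1..k}); columns 0..<dim_col. *)

definition totally_1_submodular :: "real mat \<Rightarrow> bool" where
  "totally_1_submodular A \<longleftrightarrow>
     (\<forall>I J. I \<subseteq> {..<dim_row A} \<and> J \<subseteq> {..<dim_col A} \<and> card I = card J \<and> I \<noteq> {}
        \<longrightarrow> \<bar>det (submatrix A I J)\<bar> \<le> 1)"

definition col_support :: "real mat \<Rightarrow> nat \<Rightarrow> nat set" where
  "col_support S j = {i. i < dim_row S \<and> S $$ (i, j) \<noteq> 0}"

definition sauer_matrix :: "nat \<Rightarrow> real mat \<Rightarrow> bool" where
  "sauer_matrix k S \<longleftrightarrow>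
     S \<in> carrier_mat k (2 ^ k) \<and>
     (\<forall>i<k. \<forall>j<2 ^ k. S $$ (i, j) \<in> {-1, 0, 1}) \<and>
     (\<forall>T. T \<subseteq> {..<k} \<longrightarrow> (\<exists>!j. j < 2 ^ k \<and> col_support S j = T))"

definition translate :: "real vec \<Rightarrow> real mat \<Rightarrow> real mat" where
  "translate r S = mat (dim_row S) (dim_col S) (\<lambda>(i, j). r $ i + S $$ (i, j))"

definition feasible :: "real vec \<Rightarrow> real mat \<Rightarrow> bool" where
  "feasible r S \<longleftrightarrow> dim_vec r = dim_row S \<and>
     (\<forall>i<dim_vec r. 0 \<le> r $ i \<and> r $ i < 1) \<and>
     totally_1_submodular (translate r S)"

definition feasible_for_translations :: "real mat \<Rightarrow> bool" where
  "feasible_for_translations S \<longleftrightarrow> (\<exists>r. feasible r S)"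

(* type (s, k-s), with the convention that the rows containing a 1 are the first s rows *)
definition of_type :: "real mat \<Rightarrow> nat \<Rightarrow> bool" where
  "of_type S s \<longleftrightarrow> s \<le> dim_row S \<and>
     (\<forall>i<s. \<exists>j<dim_col S. S $$ (i, j) = 1) \<and>
     (\<forall>i. s \<le> i \<and> i < dim_row S \<longrightarrow> (\<forall>j<dim_col S. S $$ (i, j) \<noteq> 1))"

end

theory Submission
  imports Defs
begin

(* If S has an entry 1 in row x, the 1 x 1 minor r_x + 1 forces r_x = 0, so the entries of row x
   of r + S are 0 off the support and +-1 on it. Any other row x has entries r_x - [x in T].
   For such a row i, taking columns that all avoid i, or all contain i, makes row i constant,
   equal to r_i or r_i - 1, while suitable 2 x 2 and 4 x 4 minors evaluate to that constant
   times a combination of signs of absolute value 2; hence r_i = 1/2. With three rows x, y, z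
   containing a 1, the 2 x 2 minors on the columns {u, v}, {x, y, z} force a cyclic identity
   between the signs, which makes the 3 x 3 minor on the columns {x, y}, {y, z}, {x, z}
   equal to +-2. *)

lemma det_mat_Suc:
  fixes f :: "nat \<times> nat \<Rightarrow> 'a::comm_ring_1"
  shows "det (mat (Suc n) (Suc n) f) = (\<Sum>j<Suc n. (-1)^j * f (0, j) *
     det (mat n n (\<lambda>(a, b). f (Suc a, if b < j then b else Suc b))))"
proof -
  let ?A = "mat (Suc n) (Suc n) f"
  have "det ?A = (\<Sum>j<Suc n. ?A $$ (0, j) * cofactor ?A 0 j)"
    by (rule laplace_expansion_row) auto
  also have "\<dots> = (\<Sum>j<Suc n. (-1)^j * f (0, j) *
     det (mat n n (\<lambda>(a, b). f (Suc a, if b < j then b else Suc b))))"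
  proof (rule sum.cong[OF refl])
    fix j assume "j \<in> {..<Suc n}"
    moreover have "mat_delete ?A 0 j = mat n n (\<lambda>(a, b). f (Suc a, if b < j then b else Suc b))"
      by (rule eq_matI) (auto simp: mat_delete_def)
    ultimately show "?A $$ (0, j) * cofactor ?A 0 j = (-1)^j * f (0, j) *
     det (mat n n (\<lambda>(a, b). f (Suc a, if b < j then b else Suc b)))"
      by (simp add: cofactor_def)
  qed
  finally show ?thesis .
qed

lemma det_mat_1: "det (mat (Suc 0) (Suc 0) f) = f (0, 0)"
  by (subst det_single) auto

lemma det_mat_2:
  fixes f :: "nat \<times> nat \<Rightarrow> 'a::comm_ring_1"
  shows "det (mat 2 2 f) = f (0,0) * f (1,1) - f (0,1) * f (1,0)"
  by (simp add: numeral_2_eq_2 det_mat_Suc det_mat_1)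

lemma det_mat_3:
  fixes f :: "nat \<times> nat \<Rightarrow> 'a::comm_ring_1"
  shows "det (mat 3 3 f) =
    f (0,0) * (f (1,1) * f (2,2) - f (1,2) * f (2,1))
  - f (0,1) * (f (1,0) * f (2,2) - f (1,2) * f (2,0))
  + f (0,2) * (f (1,0) * f (2,1) - f (1,1) * f (2,0))"
  by (simp add: numeral_3_eq_3 numeral_2_eq_2 det_mat_Suc det_mat_1)

lemma det_mat_4:
  fixes f :: "nat \<times> nat \<Rightarrow> 'a::comm_ring_1"
  shows "det (mat 4 4 f) =
    f (0,0) * det (mat 3 3 (\<lambda>(a, b). f (Suc a, [1,2,3] ! b)))
  - f (0,1) * det (mat 3 3 (\<lambda>(a, b). f (Suc a, [0,2,3] ! b)))
  + f (0,2) * det (mat 3 3 (\<lambda>(a, b). f (Suc a, [0,1,3] ! b)))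
  - f (0,3) * det (mat 3 3 (\<lambda>(a, b). f (Suc a, [0,1,2] ! b)))"
proof -
  have "det (mat 4 4 f) = (\<Sum>j<4. (-1)^j * f (0, j) *
     det (mat 3 3 (\<lambda>(a, b). f (Suc a, if b < j then b else Suc b))))"
    using det_mat_Suc[of 3 f] by simp
  then show ?thesis
    unfolding det_mat_3 by (simp add: eval_nat_numeral)
qed

lemma det_permute_rows_cols:
  assumes A: "A \<in> carrier_mat n n"
    and p: "p permutes {0..<n}" and q: "q permutes {0..<n}"
  shows "det (mat n n (\<lambda>(i, j). A $$ (p i, q j))) = signof p * signof q * det A"
proof -
  define B where "B = mat n n (\<lambda>(i, j). A $$ (i, q j))"
  have B: "B \<in> carrier_mat n n" by (simp add: B_def)
  have "B\<^sup>T = mat n n (\<lambda>(i, j). A\<^sup>T $$ (q i, j))"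
    using A q by (auto simp: B_def permutes_in_image intro!: eq_matI)
  then have "det B = signof q * det A"
    using det_permute_rows[of "A\<^sup>T" n q] det_transpose[OF A] det_transpose[OF B] A q by simp
  moreover have "mat n n (\<lambda>(i, j). A $$ (p i, q j)) = mat n n (\<lambda>(i, j). B $$ (p i, j))"
    using p by (auto simp: B_def permutes_in_image intro!: eq_matI)
  ultimately show ?thesis
    using det_permute_rows[OF B p] by simp
qed

lemma bij_betw_pick:
  assumes "finite I"
  shows "bij_betw (pick I) {..<card I} I"
proof -
  have "strict_mono_on {..<card I} (pick I)"
    by (auto intro: strict_mono_onI pick_mono)
  then have inj: "inj_on (pick I) {..<card I}"
    by (rule strict_mono_on_imp_inj_on)
  moreover have "pick I ` {..<card I} \<subseteq> I"
    using pick_in_set by auto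
  then have "pick I ` {..<card I} = I"
    using card_subset_eq[OF assms] card_image[OF inj] by simp
  ultimately show ?thesis
    by (simp add: bij_betw_def)
qed

lemma bij_betw_factor_permutes:
  fixes n :: nat
  assumes f: "bij_betw f {..<n} B" and g: "bij_betw g {..<n} B"
  obtains p where "p permutes {0..<n}" "\<And>a. a < n \<Longrightarrow> f (p a) = g a"
proof
  let ?p = "\<lambda>a. if a < n then inv_into {..<n} f (g a) else a"
  have "bij_betw (inv_into {..<n} f \<circ> g) {..<n} {..<n}"
    using bij_betw_trans[OF g bij_betw_inv_into[OF f]] .
  then have "bij_betw ?p {..<n} {..<n}"
    by (rule bij_betw_cong[THEN iffD1, rotated]) auto
  then show "?p permutes {0..<n}"
    unfolding atLeast0LessThan by (rule bij_imp_permutes) simp_all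
  show "f (?p a) = g a" if "a < n" for a
    using that bij_betw_apply[OF g] bij_betw_imp_surj_on[OF f] by (simp add: f_inv_into_f)
qed

lemma totally_1_submodular_minor:
  fixes A :: "real mat"
  assumes A: "totally_1_submodular A"
    and xs: "distinct xs" "set xs \<subseteq> {..<dim_row A}"
    and ys: "distinct ys" "set ys \<subseteq> {..<dim_col A}"
    and len: "length ys = length xs" "xs \<noteq> []"
  shows "\<bar>det (mat (length xs) (length xs) (\<lambda>(a, b). A $$ (xs ! a, ys ! b)))\<bar> \<le> 1"
proof -
  let ?k = "length xs" and ?I = "set xs" and ?J = "set ys"
  have card: "card ?I = ?k" "card ?J = ?k"
    using xs(1) ys(1) len(1) by (simp_all add: distinct_card)
  have rows: "{i. i < dim_row A \<and> i \<in> ?I} = ?I" and cols: "{j. j < dim_col A \<and> j \<in> ?J} = ?J"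
    using xs(2) ys(2) by auto
  define B where "B = submatrix A ?I ?J"
  have B: "B \<in> carrier_mat ?k ?k"
    unfolding B_def by (rule carrier_matI) (simp_all only: dim_submatrix rows cols card)
  have "card ?I = card ?J" "?I \<noteq> {}"
    using card len(2) by simp_all
  then have "\<bar>det B\<bar> \<le> 1"
    using A xs(2) ys(2) unfolding B_def totally_1_submodular_def by presburger
  have "bij_betw (nth ys) {..<?k} ?J"
    using bij_betw_nth[OF ys(1) refl refl] len(1) by simp
  obtain p where p: "p permutes {0..<?k}" "\<And>a. a < ?k \<Longrightarrow> pick ?I (p a) = xs ! a"
    using bij_betw_factor_permutes[OF bij_betw_pick[OF finite_set, of xs, unfolded card(1)]
          bij_betw_nth[OF xs(1) refl refl]] by blast
  obtain q where q: "q permutes {0..<?k}" "\<And>b. b < ?k \<Longrightarrow> pick ?J (q b) = ys ! b"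
    using bij_betw_factor_permutes[OF bij_betw_pick[OF finite_set, of ys, unfolded card(2)]
          \<open>bij_betw (nth ys) {..<?k} ?J\<close>] by blast
  have "mat ?k ?k (\<lambda>(a, b). A $$ (xs ! a, ys ! b)) = mat ?k ?k (\<lambda>(a, b). B $$ (p a, q b))"
  proof (rule eq_matI)
    fix a b assume "a < dim_row (mat ?k ?k (\<lambda>(a, b). B $$ (p a, q b)))"
      "b < dim_col (mat ?k ?k (\<lambda>(a, b). B $$ (p a, q b)))"
    then have ab: "a < ?k" "b < ?k" by simp_all
    then have "p a < card {i. i < dim_row A \<and> i \<in> ?I}" "q b < card {j. j < dim_col A \<and> j \<in> ?J}"
      unfolding rows cols card using p(1) q(1) by (simp_all add: permutes_nat_less)
    then show "mat ?k ?k (\<lambda>(a, b). A $$ (xs ! a, ys ! b)) $$ (a, b)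
        = mat ?k ?k (\<lambda>(a, b). B $$ (p a, q b)) $$ (a, b)"
      using ab p(2) q(2) unfolding B_def by (simp add: submatrix_index)
  qed simp_all
  then show ?thesis
    using det_permute_rows_cols[OF B p(1) q(1)] \<open>\<bar>det B\<bar> \<le> 1\<close>
    by (simp add: abs_mult sign_def)
qed

(* E x T is the entry in row x and in the column indexed by T of a matrix whose columns are
   indexed by the subsets of [k]. *)
definition subset_totally_1_submodular :: "nat \<Rightarrow> (nat \<Rightarrow> nat set \<Rightarrow> real) \<Rightarrow> bool" where
  "subset_totally_1_submodular k E \<longleftrightarrow>
     (\<forall>xs Ts. distinct xs \<and> set xs \<subseteq> {..<k} \<and> distinct Ts \<and> set Ts \<subseteq> Pow {..<k} \<and>
        length Ts = length xs \<and> xs \<noteq> [] \<longrightarrow>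
        \<bar>det (mat (length xs) (length xs) (\<lambda>(a, b). E (xs ! a) (Ts ! b)))\<bar> \<le> 1)"

definition sign_row :: "(nat \<Rightarrow> nat set \<Rightarrow> real) \<Rightarrow> nat \<Rightarrow> bool" where
  "sign_row E x \<longleftrightarrow> (\<forall>T. E x T \<in> (if x \<in> T then {-1, 1} else {0}))"

definition offset_row :: "(nat \<Rightarrow> nat set \<Rightarrow> real) \<Rightarrow> nat \<Rightarrow> real \<Rightarrow> bool" where
  "offset_row E x c \<longleftrightarrow> (\<forall>T. E x T = c - of_bool (x \<in> T))"

lemma subset_totally_1_submodularD:
  assumes "subset_totally_1_submodular k E"
    and "distinct xs" "set xs \<subseteq> {..<k}"
    and "distinct (map (\<lambda>T. map (\<lambda>x. x \<in> T) ws) Ts)" "set Ts \<subseteq> Pow {..<k}"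
    and "length xs = n" "length Ts = n" "n > 0"
  shows "\<bar>det (mat n n (\<lambda>(a, b). E (xs ! a) (Ts ! b)))\<bar> \<le> 1"
proof -
  have "distinct Ts"
    using assms(4) by (simp add: distinct_map)
  then show ?thesis
    using assms unfolding subset_totally_1_submodular_def by fastforce
qed

lemma sign_row_outside: "sign_row E x \<Longrightarrow> x \<notin> T \<Longrightarrow> E x T = 0"
  unfolding sign_row_def by (metis singletonD)

lemma sign_row_inside: "sign_row E x \<Longrightarrow> x \<in> T \<Longrightarrow> E x T \<in> {-1, 1}"
  unfolding sign_row_def by metis

lemma offset_rowD: "offset_row E x c \<Longrightarrow> E x T = c - of_bool (x \<in> T)"
  unfolding offset_row_def by blast

lemma mult_sign:
  fixes u v :: "'a::ring_1"
  shows "u \<in> {-1, 1} \<Longrightarrow> v \<in> {-1, 1} \<Longrightarrow> u * v \<in> {-1, 1}"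
  by auto

lemma abs_double_sign:
  fixes u :: "'a::linordered_idom"
  shows "u \<in> {-1, 1} \<Longrightarrow> \<bar>u + u\<bar> = 2"
  by auto

lemma offset_row_half_if_four_offset_rows:
  assumes M: "subset_totally_1_submodular k E"
    and rows: "offset_row E i c" "offset_row E a ca" "offset_row E b cb" "offset_row E d cd"
    and idx: "distinct [i, a, b, d]" "set [i, a, b, d] \<subseteq> {..<k}"
  shows "c = 1/2"
proof -
  note entries = offset_rowD[OF rows(1)] offset_rowD[OF rows(2)] offset_rowD[OF rows(3)] offset_rowD[OF rows(4)]
  (* Adding I to all columns leaves the other rows unchanged and makes row i the constant E i I,
     which is c for I = {} and c - 1 for I = {i}. *)
  have "\<bar>E i I\<bar> \<le> 1/2" if I: "I = {} \<or> I = {i}" for I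
  proof -
    let ?Ts = "[I, I \<union> {a, b}, I \<union> {a, d}, I \<union> {b, d}]"
    have "\<bar>det (mat 4 4 (\<lambda>(x, y). E ([i, a, b, d] ! x) (?Ts ! y)))\<bar> \<le> 1"
      by (rule subset_totally_1_submodularD[OF M, where ws = "[a, b, d]"]) (use I idx in auto)
    moreover have "det (mat 4 4 (\<lambda>(x, y). E ([i, a, b, d] ! x) (?Ts ! y))) = 2 * E i I"
      using I idx by (elim disjE) (simp_all add: det_mat_4 det_mat_3 entries eq_commute algebra_simps)
    ultimately show ?thesis by simp
  qed
  from this[of "{}"] this[of "{i}"] show ?thesis
    by (simp add: entries)
qed

lemma offset_row_half_if_one_sign_row:
  assumes M: "subset_totally_1_submodular k E"
    and rows: "sign_row E z" "offset_row E i c" "offset_row E a ca" "offset_row E b cb"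
    and idx: "distinct [z, i, a, b]" "set [z, i, a, b] \<subseteq> {..<k}"
  shows "c = 1/2"
proof -
  note entries = sign_row_outside[OF rows(1)] offset_rowD[OF rows(2)] offset_rowD[OF rows(3)] offset_rowD[OF rows(4)]
  have "\<bar>E i I\<bar> \<le> 1/2" if I: "I = {} \<or> I = {i}" for I
  proof -
    let ?p = "E z (I \<union> {z})" and ?q = "E z (I \<union> {z, a, b})"
    have "\<bar>det (mat 2 2 (\<lambda>(x, y). E ([z, i] ! x) ([I \<union> {z}, I \<union> {z, a, b}] ! y)))\<bar> \<le> 1"
      by (rule subset_totally_1_submodularD[OF M, where ws = "[a]"]) (use I idx in auto)
    moreover have "det (mat 2 2 (\<lambda>(x, y). E ([z, i] ! x) ([I \<union> {z}, I \<union> {z, a, b}] ! y)))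
        = E i I * (?p - ?q)"
      using I idx by (elim disjE) (simp_all add: det_mat_2 entries eq_commute algebra_simps)
    moreover have "\<bar>det (mat 4 4 (\<lambda>(x, y). E ([z, i, a, b] ! x)
        ([I \<union> {z}, I \<union> {a}, I \<union> {b}, I \<union> {z, a, b}] ! y)))\<bar> \<le> 1"
      by (rule subset_totally_1_submodularD[OF M, where ws = "[z, a, b]"]) (use I idx in auto)
    moreover have "det (mat 4 4 (\<lambda>(x, y). E ([z, i, a, b] ! x)
        ([I \<union> {z}, I \<union> {a}, I \<union> {b}, I \<union> {z, a, b}] ! y))) = - E i I * (?p + ?q)"
      using I idx by (elim disjE) (simp_all add: det_mat_4 det_mat_3 entries eq_commute algebra_simps)
    moreover have "?p \<in> {-1, 1}" "?q \<in> {-1, 1}"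
      by (rule sign_row_inside[OF rows(1)], simp)+
    ultimately show ?thesis
      by (auto simp: abs_mult)
  qed
  from this[of "{}"] this[of "{i}"] show ?thesis
    by (simp add: entries)
qed

lemma offset_row_half_if_two_sign_rows:
  assumes M: "subset_totally_1_submodular k E"
    and rows: "sign_row E z" "sign_row E w" "offset_row E i c" "offset_row E a ca"
    and idx: "distinct [z, w, i, a]" "set [z, w, i, a] \<subseteq> {..<k}"
  shows "c = 1/2"
proof -
  note entries = sign_row_outside[OF rows(1)] sign_row_outside[OF rows(2)]
    offset_rowD[OF rows(3)] offset_rowD[OF rows(4)]
  have "\<bar>E i I\<bar> \<le> 1/2" if I: "I = {} \<or> I = {i}" for I
  proof -
    let ?pz = "E z (I \<union> {z})" and ?qz = "E z (I \<union> {z, w, a})"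
      and ?pw = "E w (I \<union> {w})" and ?qw = "E w (I \<union> {z, w, a})"
    have "\<bar>det (mat 2 2 (\<lambda>(x, y). E ([z, i] ! x) ([I \<union> {z}, I \<union> {z, w, a}] ! y)))\<bar> \<le> 1"
      by (rule subset_totally_1_submodularD[OF M, where ws = "[w]"]) (use I idx in auto)
    moreover have "det (mat 2 2 (\<lambda>(x, y). E ([z, i] ! x) ([I \<union> {z}, I \<union> {z, w, a}] ! y)))
        = E i I * (?pz - ?qz)"
      using I idx by (elim disjE) (simp_all add: det_mat_2 entries eq_commute algebra_simps)
    moreover have "\<bar>det (mat 2 2 (\<lambda>(x, y). E ([w, i] ! x) ([I \<union> {w}, I \<union> {z, w, a}] ! y)))\<bar> \<le> 1"
      by (rule subset_totally_1_submodularD[OF M, where ws = "[z]"]) (use I idx in auto)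
    moreover have "det (mat 2 2 (\<lambda>(x, y). E ([w, i] ! x) ([I \<union> {w}, I \<union> {z, w, a}] ! y)))
        = E i I * (?pw - ?qw)"
      using I idx by (elim disjE) (simp_all add: det_mat_2 entries eq_commute algebra_simps)
    moreover have "\<bar>det (mat 4 4 (\<lambda>(x, y). E ([z, w, i, a] ! x)
        ([I \<union> {z}, I \<union> {w}, I \<union> {a}, I \<union> {z, w, a}] ! y)))\<bar> \<le> 1"
      by (rule subset_totally_1_submodularD[OF M, where ws = "[z, w, a]"]) (use I idx in auto)
    moreover have "det (mat 4 4 (\<lambda>(x, y). E ([z, w, i, a] ! x)
        ([I \<union> {z}, I \<union> {w}, I \<union> {a}, I \<union> {z, w, a}] ! y))) = - E i I * (?pz * ?qw + ?qz * ?pw)"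
      using I idx by (elim disjE) (simp_all add: det_mat_4 det_mat_3 entries eq_commute algebra_simps)
    moreover have "?pz \<in> {-1, 1}" "?qz \<in> {-1, 1}"
      by (rule sign_row_inside[OF rows(1)], simp)+
    moreover have "?pw \<in> {-1, 1}" "?qw \<in> {-1, 1}"
      by (rule sign_row_inside[OF rows(2)], simp)+
    ultimately show ?thesis
      by (auto simp: abs_mult)
  qed
  from this[of "{}"] this[of "{i}"] show ?thesis
    by (simp add: entries)
qed

lemma no_three_sign_rows:
  assumes M: "subset_totally_1_submodular k E"
    and rows: "sign_row E x" "sign_row E y" "sign_row E z"
    and idx: "distinct [x, y, z]" "set [x, y, z] \<subseteq> {..<k}"
  shows False
proof -
  note entries = sign_row_outside[OF rows(1)] sign_row_outside[OF rows(2)] sign_row_outside[OF rows(3)]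
  have sign_eq: "u = v" if "u \<in> {-1, 1}" "v \<in> {-1, 1}" "\<bar>u - v\<bar> \<le> 1" for u v :: real
    using that by auto
  have sign: "E u T \<in> {-1, 1}" if "u \<in> {x, y, z}" "u \<in> T" for u T
    using that sign_row_inside[OF rows(1)] sign_row_inside[OF rows(2)] sign_row_inside[OF rows(3)]
    by blast
  have minor2: "E u {u, v} * E v {x, y, z} = E u {x, y, z} * E v {u, v}"
    if "[u, v] \<in> {[x, y], [x, z], [y, z]}" for u v
  proof (rule sign_eq)
    have "\<bar>det (mat 2 2 (\<lambda>(a, b). E ([u, v] ! a) ([{u, v}, {x, y, z}] ! b)))\<bar> \<le> 1"
      by (rule subset_totally_1_submodularD[OF M, where ws = "[x, y, z]"]) (use that idx in auto)
    then show "\<bar>E u {u, v} * E v {x, y, z} - E u {x, y, z} * E v {u, v}\<bar> \<le> 1"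
      by (simp add: det_mat_2)
    show "E u {u, v} * E v {x, y, z} \<in> {-1, 1}" "E u {x, y, z} * E v {u, v} \<in> {-1, 1}"
      by (intro mult_sign sign; use that in auto)+
  qed
  let ?t = "E z {x, z} * E x {x, y} * E y {y, z}" and ?s = "E z {y, z} * E x {x, z} * E y {x, y}"
  have minor3: "\<bar>det (mat 3 3 (\<lambda>(a, b). E ([x, y, z] ! a) ([{x, y}, {y, z}, {x, z}] ! b)))\<bar> \<le> 1"
    by (rule subset_totally_1_submodularD[OF M, where ws = "[x, y, z]"]) (use idx in auto)
  have det3: "det (mat 3 3 (\<lambda>(a, b). E ([x, y, z] ! a) ([{x, y}, {y, z}, {x, z}] ! b))) = ?t + ?s"
    using idx by (simp add: det_mat_3 entries eq_commute algebra_simps)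
  have cycle: "?t = ?s"
  proof -
    define X Y Z where "X = E x {x, y, z}" and "Y = E y {x, y, z}" and "Z = E z {x, y, z}"
    have xy: "E x {x, y} * Y = X * E y {x, y}" and xz: "E x {x, z} * Z = X * E z {x, z}"
      and yz: "E y {y, z} * Z = Y * E z {y, z}"
      using minor2[of x y] minor2[of x z] minor2[of y z] by (simp_all add: X_def Y_def Z_def)
    have "X * Y * Z \<in> {-1, 1}"
      unfolding X_def Y_def Z_def by (intro mult_sign sign) auto
    then have "X * Y * Z \<noteq> 0"
      by auto
    have "?t * (X * Y * Z) = (E x {x, y} * Y) * (E y {y, z} * Z) * (X * E z {x, z})"
      by (simp only: ac_simps)
    also have "\<dots> = (X * E y {x, y}) * (Y * E z {y, z}) * (E x {x, z} * Z)"
      by (simp only: xy yz xz)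
    also have "\<dots> = ?s * (X * Y * Z)"
      by (simp only: ac_simps)
    finally show ?thesis
      using \<open>X * Y * Z \<noteq> 0\<close> by simp
  qed
  have "?s \<in> {-1, 1}"
    by (intro mult_sign sign) auto
  then have "\<bar>?s + ?s\<bar> = 2"
    by (rule abs_double_sign)
  with minor3 show False
    unfolding det3 cycle by simp
qed

(* Intersecting with [k] gives every set T a column, so that sign_row and offset_row below can
   describe the rows of r + S without a side condition on T. *)
definition sauer_col :: "nat \<Rightarrow> real mat \<Rightarrow> nat set \<Rightarrow> nat" where
  "sauer_col k S T = (THE j. j < 2 ^ k \<and> col_support S j = T \<inter> {..<k})"

definition sauer_entry :: "nat \<Rightarrow> real vec \<Rightarrow> real mat \<Rightarrow> nat \<Rightarrow> nat set \<Rightarrow> real" where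
  "sauer_entry k r S x T = r $ x + S $$ (x, sauer_col k S T)"

lemma sauer_matrix_dims:
  assumes "sauer_matrix k S"
  shows "dim_row S = k" "dim_col S = 2 ^ k"
  using assms[unfolded sauer_matrix_def, THEN conjunct1] by auto

lemma
  assumes "sauer_matrix k S"
  shows sauer_col_less: "sauer_col k S T < 2 ^ k"
    and col_support_sauer_col: "col_support S (sauer_col k S T) = T \<inter> {..<k}"
proof -
  have "\<exists>!j. j < 2 ^ k \<and> col_support S j = T \<inter> {..<k}"
    using assms[unfolded sauer_matrix_def, THEN conjunct2, THEN conjunct2] by simp
  from theI'[OF this] show "sauer_col k S T < 2 ^ k" "col_support S (sauer_col k S T) = T \<inter> {..<k}"
    unfolding sauer_col_def by simp_all
qed

lemma inj_on_sauer_col: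
  assumes "sauer_matrix k S"
  shows "inj_on (sauer_col k S) (Pow {..<k})"
proof (rule inj_onI)
  fix T T' assume "T \<in> Pow {..<k}" "T' \<in> Pow {..<k}" "sauer_col k S T = sauer_col k S T'"
  then show "T = T'"
    using col_support_sauer_col[OF assms, of T] col_support_sauer_col[OF assms, of T'] by auto
qed

lemma sauer_col_entry_nonzero_iff:
  assumes "sauer_matrix k S" "x < k"
  shows "S $$ (x, sauer_col k S T) \<noteq> 0 \<longleftrightarrow> x \<in> T"
proof -
  have "x \<in> col_support S (sauer_col k S T) \<longleftrightarrow> x \<in> T"
    using col_support_sauer_col[OF assms(1)] assms(2) by simp
  then show ?thesis
    using assms(2) sauer_matrix_dims[OF assms(1)] by (simp add: col_support_def)
qed

lemma sauer_col_entry_mem: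
  assumes "sauer_matrix k S" "x < k"
  shows "S $$ (x, sauer_col k S T) \<in> {-1, 0, 1}"
  using assms(1)[unfolded sauer_matrix_def, THEN conjunct2, THEN conjunct1] assms(2)
    sauer_col_less[OF assms(1)] by blast

lemma feasible_subset_totally_1_submodular:
  assumes S: "sauer_matrix k S" and r: "feasible r S"
  shows "subset_totally_1_submodular k (sauer_entry k r S)"
  unfolding subset_totally_1_submodular_def
proof (intro allI impI)
  fix xs Ts assume xs_Ts: "distinct xs \<and> set xs \<subseteq> {..<k} \<and> distinct Ts \<and> set Ts \<subseteq> Pow {..<k} \<and>
    length Ts = length xs \<and> xs \<noteq> []"
  let ?A = "translate r S" and ?js = "map (sauer_col k S) Ts"
  have dims: "dim_row ?A = k" "dim_col ?A = 2 ^ k"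
    using sauer_matrix_dims[OF S] by (simp_all add: translate_def)
  have "xs ! a < k" if "a < length xs" for a
    using xs_Ts that nth_mem by blast
  then have "mat (length xs) (length xs) (\<lambda>(a, b). sauer_entry k r S (xs ! a) (Ts ! b))
      = mat (length xs) (length xs) (\<lambda>(a, b). ?A $$ (xs ! a, ?js ! b))"
    using xs_Ts sauer_matrix_dims[OF S] sauer_col_less[OF S]
    by (auto simp: sauer_entry_def translate_def intro!: eq_matI)
  moreover have "distinct ?js"
    using xs_Ts inj_on_sauer_col[OF S] by (auto simp: distinct_map intro: inj_on_subset)
  moreover have "set ?js \<subseteq> {..<dim_col ?A}"
    using sauer_col_less[OF S] dims by auto
  ultimately show "\<bar>det (mat (length xs) (length xs) (\<lambda>(a, b). sauer_entry k r S (xs ! a) (Ts ! b)))\<bar> \<le> 1"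
    using totally_1_submodular_minor[of ?A xs ?js] r xs_Ts dims by (simp add: feasible_def)
qed

lemma feasible_row_with_one_eq_0:
  assumes r: "feasible r S" and ij: "i < dim_row S" "j < dim_col S" "S $$ (i, j) = 1"
  shows "r $ i = 0"
proof -
  have "\<bar>r $ i + 1\<bar> \<le> 1"
    using totally_1_submodular_minor[of "translate r S" "[i]" "[j]"] r ij
    by (simp add: feasible_def translate_def det_mat_1)
  moreover have "0 \<le> r $ i"
    using r ij by (simp add: feasible_def)
  ultimately show ?thesis
    by simp
qed

lemma
  assumes S: "sauer_matrix k S" and r: "feasible r S" and "of_type S s" "x < s"
  shows translation_eq_0_if_of_type: "r $ x = 0"
    and sign_row_if_of_type: "sign_row (sauer_entry k r S) x"
proof -
  have "x < k" "\<exists>j < dim_col S. S $$ (x, j) = 1"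
    using assms sauer_matrix_dims[OF S] unfolding of_type_def by auto
  then show "r $ x = 0"
    using feasible_row_with_one_eq_0[OF r] sauer_matrix_dims[OF S] by blast
  then show "sign_row (sauer_entry k r S) x"
    using sauer_col_entry_mem[OF S \<open>x < k\<close>] sauer_col_entry_nonzero_iff[OF S \<open>x < k\<close>]
    unfolding sign_row_def sauer_entry_def by auto
qed

lemma offset_row_if_of_type:
  assumes S: "sauer_matrix k S" and "of_type S s" "s \<le> x" "x < k"
  shows "offset_row (sauer_entry k r S) x (r $ x)"
proof -
  have "S $$ (x, sauer_col k S T) \<noteq> 1" for T
    using assms sauer_matrix_dims[OF S] sauer_col_less[OF S] unfolding of_type_def by auto
  then show ?thesis
    using sauer_col_entry_mem[OF S \<open>x < k\<close>] sauer_col_entry_nonzero_iff[OF S \<open>x < k\<close>]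
    unfolding offset_row_def sauer_entry_def by (auto simp: of_bool_def)
qed

lemma eq_vec_of_listI:
  assumes "dim_vec r = length xs" "\<And>i. i < length xs \<Longrightarrow> r $ i = xs ! i"
  shows "r = vec_of_list xs"
  using assms by (intro eq_vecI) (simp_all add: vec_of_list_index)

lemma feasible_type_0:
  assumes S: "sauer_matrix 4 S" and r: "feasible r S" and type: "of_type S 0"
  shows "r = vec_of_list [1/2, 1/2, 1/2, 1/2]"
proof -
  let ?E = "sauer_entry 4 r S"
  have M: "subset_totally_1_submodular 4 ?E"
    by (rule feasible_subset_totally_1_submodular[OF S r])
  have offset: "offset_row ?E x (r $ x)" if "x < 4" for x
    using offset_row_if_of_type[OF S type] that by simp
  have "r $ i = 1/2" if "distinct [i, a, b, d]" "set [i, a, b, d] \<subseteq> {..<4}" for i a b d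
    by (rule offset_row_half_if_four_offset_rows[OF M _ _ _ _ that]) (use that in \<open>auto intro: offset\<close>)
  from this[of 0 1 2 3] this[of 1 0 2 3] this[of 2 0 1 3] this[of 3 0 1 2] show ?thesis
    using r sauer_matrix_dims[OF S]
    by (intro eq_vec_of_listI) (auto simp: feasible_def less_Suc_eq numeral_eq_Suc)
qed

lemma feasible_type_1:
  assumes S: "sauer_matrix 4 S" and r: "feasible r S" and type: "of_type S 1"
  shows "r = vec_of_list [0, 1/2, 1/2, 1/2]"
proof -
  let ?E = "sauer_entry 4 r S"
  have M: "subset_totally_1_submodular 4 ?E"
    by (rule feasible_subset_totally_1_submodular[OF S r])
  have offset: "offset_row ?E x (r $ x)" if "1 \<le> x" "x < 4" for x
    using offset_row_if_of_type[OF S type] that by simp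
  have "r $ i = 1/2" if "distinct [0, i, a, b]" "set [0, i, a, b] \<subseteq> {..<4}" for i a b
    by (rule offset_row_half_if_one_sign_row[OF M sign_row_if_of_type[OF S r type] _ _ _ that])
      (use that in \<open>auto intro: offset\<close>)
  from this[of 1 2 3] this[of 2 1 3] this[of 3 1 2] show ?thesis
    using r sauer_matrix_dims[OF S] translation_eq_0_if_of_type[OF S r type]
    by (intro eq_vec_of_listI) (auto simp: feasible_def less_Suc_eq numeral_eq_Suc)
qed

lemma feasible_type_2:
  assumes S: "sauer_matrix 4 S" and r: "feasible r S" and type: "of_type S 2"
  shows "r = vec_of_list [0, 0, 1/2, 1/2]"
proof -
  let ?E = "sauer_entry 4 r S"
  have M: "subset_totally_1_submodular 4 ?E"
    by (rule feasible_subset_totally_1_submodular[OF S r])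
  have offset: "offset_row ?E x (r $ x)" if "2 \<le> x" "x < 4" for x
    using offset_row_if_of_type[OF S type] that by simp
  have "r $ i = 1/2" if "distinct [0, 1, i, a]" "set [0, 1, i, a] \<subseteq> {..<4}" for i a
    by (rule offset_row_half_if_two_sign_rows[OF M sign_row_if_of_type[OF S r type]
          sign_row_if_of_type[OF S r type] _ _ that]) (use that in \<open>auto intro: offset\<close>)
  from this[of 2 3] this[of 3 2] show ?thesis
    using r sauer_matrix_dims[OF S] translation_eq_0_if_of_type[OF S r type]
    by (intro eq_vec_of_listI) (auto simp: feasible_def less_Suc_eq numeral_eq_Suc)
qed

lemma infeasible_type_3_or_4:
  assumes S: "sauer_matrix 4 S" and type: "of_type S 3 \<or> of_type S 4"
  shows "\<not> feasible_for_translations S"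
proof
  assume "feasible_for_translations S"
  then obtain r where r: "feasible r S"
    unfolding feasible_for_translations_def by blast
  have sign: "sign_row (sauer_entry 4 r S) x" if "x < 3" for x
    using type sign_row_if_of_type[OF S r, of 3] sign_row_if_of_type[OF S r, of 4] that
    by force
  show False
    using no_three_sign_rows[OF feasible_subset_totally_1_submodular[OF S r] sign sign sign, of 0 1 2]
    by simp
qed

theorem proposition3p5:
  fixes S :: "real mat" and r :: "real vec"
  assumes "sauer_matrix 4 S" and "feasible r S"
  shows "(of_type S 0 \<longrightarrow> r = vec_of_list [1/2, 1/2, 1/2, 1/2]) \<and>
         (of_type S 1 \<longrightarrow> r = vec_of_list [0, 1/2, 1/2, 1/2]) \<and>
         (of_type S 2 \<longrightarrow> r = vec_of_list [0, 0, 1/2, 1/2]) \<and>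
         (of_type S 3 \<or> of_type S 4 \<longrightarrow> \<not> feasible_for_translations S)"
  using feasible_type_0[OF assms] feasible_type_1[OF assms] feasible_type_2[OF assms]
    infeasible_type_3_or_4[OF assms(1)] by blast

end
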